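(* Let $u\in\mathcal{B}^N$, $m\in\mathbb{R}$ and $r\in\mathbb{R}^A$ be such that there exists $\sigma$ with $(r,\sigma)\in F(N,A,u,m)$. Then there is $\Lambda>0$ such that for each $0<\Lambda'\le\Lambda$, if $\mu$ is a solution to $\max_{\gamma:N\to A\text{ bijection}}\sum_{i\in N}\log(\lambda_{i\gamma(i)}(u,r,\Lambda'))$, then for each $i\in N$ and each $\sigma$ with $(r,\sigma)\in F(N,A,u,m)$, $u_i(r_{\mu(i)},\mu(i))=u_i(r_{\sigma(i)},\sigma(i))$.
   Context: Fix a finite set $\{\rho_1,\dots,\rho_k\}\subseteq\mathbb{R}_+$ with $\rho_1=0$. $N=\{1,\dots,n\}$ are agents, $A$ a set of $n$ rooms. $\mathcal{B}$ is the set of utility functions $u_i(r_a,a)=v^i_a-r_a-\rho_i\max\{0,r_a-b_i\}$ with $v^i\in\mathbb{R}^A$, $b_i\ge0$, $\rho_i\in\{\rho_1,\dots,\rho_k\}$. An allocation for $(N,A,u,m)$ is $(r,\sigma)$ with $\sigma:N\to A$ a bijection, $r\in\mathbb{R}^A$, $\sum_ar_a=m$; it is envy-free if $u_i(r_{\sigma(i)},\sigma(i))\ge u_i(r_{\sigma(j)},\sigma(j))$ for all $i,j$; $F(N,A,u,m)$ denotes the set of envy-free allocations. $\lambda_{ia}(u,r):=1+\rho_i$ if $r_a>b_i$ and $:=1$ otherwise. For $\Lambda>0$ and $r$ as in the claim, $\lambda_{ia}(u,r,\Lambda):=\lambda_{ia}(u,r)$ if $u_i(r_{\sigma(i)},\sigma(i))=u_i(r_a,a)$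 (for some/any $\sigma$ with $(r,\sigma)$ envy-free), and $\lambda_{ia}(u,r,\Lambda):=\Lambda$ otherwise. *)

theory Defs
  imports Complex_Main
begin

text \<open>A utility profile u in B^N is encoded by three functions:
  v i a (valuation of agent i for room a), b i (budget of agent i),
  rho i (penalty rate of agent i).
  u_i(r_a, a) = v^i_a - r_a - rho_i * max 0 (r_a - b_i).\<close>

definition util :: "(nat \<Rightarrow> 'a \<Rightarrow> real) \<Rightarrow> (nat \<Rightarrow> real) \<Rightarrow> (nat \<Rightarrow> real)
    \<Rightarrow> nat \<Rightarrow> real \<Rightarrow> 'a \<Rightarrow> real" where
  "util v b rho i ra a = v i a - ra - rho i * max 0 (ra - b i)"

definition in_BN :: "real set \<Rightarrow> nat set \<Rightarrow> (nat \<Rightarrow> real) \<Rightarrow> (nat \<Rightarrow> real) \<Rightarrow> bool" where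
  "in_BN Rhos N b rho \<longleftrightarrow> (\<forall>i\<in>N. b i \<ge> 0 \<and> rho i \<in> Rhos)"

definition envy_free_alloc ::
  "nat set \<Rightarrow> 'a set \<Rightarrow> (nat \<Rightarrow> 'a \<Rightarrow> real) \<Rightarrow> (nat \<Rightarrow> real) \<Rightarrow> (nat \<Rightarrow> real)
    \<Rightarrow> real \<Rightarrow> ('a \<Rightarrow> real) \<Rightarrow> (nat \<Rightarrow> 'a) \<Rightarrow> bool" where
  "envy_free_alloc N A v b rho m r \<sigma> \<longleftrightarrow>
     bij_betw \<sigma> N A \<and> sum r A = m \<and>
     (\<forall>i\<in>N. \<forall>j\<in>N. util v b rho i (r (\<sigma> i)) (\<sigma> i) \<ge> util v b rho i (r (\<sigma> j)) (\<sigma> j))"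

definition lam :: "(nat \<Rightarrow> real) \<Rightarrow> (nat \<Rightarrow> real) \<Rightarrow> ('a \<Rightarrow> real) \<Rightarrow> nat \<Rightarrow> 'a \<Rightarrow> real" where
  "lam b rho r i a = (if r a > b i then 1 + rho i else 1)"

definition lamL ::
  "nat set \<Rightarrow> 'a set \<Rightarrow> (nat \<Rightarrow> 'a \<Rightarrow> real) \<Rightarrow> (nat \<Rightarrow> real) \<Rightarrow> (nat \<Rightarrow> real)
    \<Rightarrow> real \<Rightarrow> ('a \<Rightarrow> real) \<Rightarrow> real \<Rightarrow> nat \<Rightarrow> 'a \<Rightarrow> real" where
  "lamL N A v b rho m r \<Lambda> i a =
     (if \<exists>\<sigma>. envy_free_alloc N A v b rho m r \<sigma> \<and>
             util v b rho i (r (\<sigma> i)) (\<sigma> i) = util v b rho i (r a) a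
      then lam b rho r i a else \<Lambda>)"

definition is_max_log_assignment ::
  "nat set \<Rightarrow> 'a set \<Rightarrow> (nat \<Rightarrow> 'a \<Rightarrow> real) \<Rightarrow> (nat \<Rightarrow> 'a) \<Rightarrow> bool" where
  "is_max_log_assignment N A w \<mu> \<longleftrightarrow> bij_betw \<mu> N A \<and>
     (\<forall>\<gamma>. bij_betw \<gamma> N A \<longrightarrow> (\<Sum>i\<in>N. ln (w i (\<gamma> i))) \<le> (\<Sum>i\<in>N. ln (w i (\<mu> i))))"

end

theory Submission
  imports Defs
begin

text \<open>All envy-free allocations with rent vector r give every agent the same utility, so the
  indifference test in lamL can be made against one fixed envy-free allocation \<sigma>0. Along \<sigma>0
  every weight is lam \<ge> 1, so a log-maximal assignment has nonnegative total. Every weight is at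
  most 1 + rho, hence an assignment that uses the weight \<Lambda>' < exp (- \<Sum>j. ln (1 + rho j)) for
  some agent has negative total. So for small \<Lambda>' a log-maximal assignment never uses \<Lambda>', i.e.
  it gives every agent a room that agent likes exactly as much as its room under \<sigma>0.\<close>

lemma envy_free_alloc_util_ge:
  assumes "envy_free_alloc N A v b rho m r \<sigma>" "i \<in> N" "a \<in> A"
  shows "util v b rho i (r a) a \<le> util v b rho i (r (\<sigma> i)) (\<sigma> i)"
proof -
  have "bij_betw \<sigma> N A" using assms(1) unfolding envy_free_alloc_def by blast
  then obtain j where "j \<in> N" "a = \<sigma> j" using assms(3) by (metis bij_betw_imp_surj_on imageE)
  then show ?thesis using assms(1,2) unfolding envy_free_alloc_def by blast
qed

lemma envy_free_alloc_util_eq: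
  assumes "envy_free_alloc N A v b rho m r \<sigma>" "envy_free_alloc N A v b rho m r \<sigma>'" "i \<in> N"
  shows "util v b rho i (r (\<sigma> i)) (\<sigma> i) = util v b rho i (r (\<sigma>' i)) (\<sigma>' i)"
proof -
  have "\<sigma> i \<in> A" "\<sigma>' i \<in> A"
    using assms unfolding envy_free_alloc_def by (meson bij_betw_apply)+
  then show ?thesis
    using envy_free_alloc_util_ge[OF assms(1,3)] envy_free_alloc_util_ge[OF assms(2,3)] by force
qed

lemma lamL_eq_if_envy_free:
  assumes "envy_free_alloc N A v b rho m r \<sigma>" "i \<in> N"
  shows "lamL N A v b rho m r \<Lambda> i a =
    (if util v b rho i (r a) a = util v b rho i (r (\<sigma> i)) (\<sigma> i) then lam b rho r i a else \<Lambda>)"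
  unfolding lamL_def using assms envy_free_alloc_util_eq[OF assms(1) _ assms(2)] by metis

lemma lam_bounds:
  assumes "0 \<le> rho i"
  shows "1 \<le> lam b rho r i a" "lam b rho r i a \<le> 1 + rho i"
  using assms unfolding lam_def by auto

lemma lamL_bounds:
  assumes "envy_free_alloc N A v b rho m r \<sigma>" "i \<in> N" "0 \<le> rho i" "0 < \<Lambda>" "\<Lambda> \<le> 1"
  shows "0 < lamL N A v b rho m r \<Lambda> i a" "lamL N A v b rho m r \<Lambda> i a \<le> 1 + rho i"
  using lam_bounds[of rho i b r a, OF assms(3)] assms(4,5)
  unfolding lamL_eq_if_envy_free[OF assms(1,2)] by auto

lemma lamL_at_envy_free_ge_one:
  assumes "envy_free_alloc N A v b rho m r \<sigma>" "i \<in> N" "0 \<le> rho i"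
  shows "1 \<le> lamL N A v b rho m r \<Lambda> i (\<sigma> i)"
  using lam_bounds(1)[of rho i, OF assms(3)] unfolding lamL_eq_if_envy_free[OF assms(1,2)] by simp

lemma max_log_assignment_weight_lower_bound:
  assumes "finite N" "is_max_log_assignment N A w \<mu>" "bij_betw \<sigma> N A"
    and "\<And>j. j \<in> N \<Longrightarrow> 1 \<le> w j (\<sigma> j)"
    and "\<And>j a. j \<in> N \<Longrightarrow> a \<in> A \<Longrightarrow> 0 < w j a \<and> w j a \<le> U j"
    and "i \<in> N"
  shows "- (\<Sum>j\<in>N. ln (U j)) \<le> ln (w i (\<mu> i))"
proof -
  have \<mu>_room: "\<mu> j \<in> A" if "j \<in> N" for j
    using assms(2) that unfolding is_max_log_assignment_def by (meson bij_betw_apply)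
  have U_ge_one: "1 \<le> U j" if "j \<in> N" for j
    using assms(4,5)[of j] that bij_betw_apply[OF assms(3)] by force
  have "0 \<le> (\<Sum>j\<in>N. ln (w j (\<sigma> j)))"
    using assms(4) by (intro sum_nonneg) (simp add: order_trans[OF zero_le_one])
  also have "\<dots> \<le> (\<Sum>j\<in>N. ln (w j (\<mu> j)))"
    using assms(2,3) unfolding is_max_log_assignment_def by blast
  also have "\<dots> = ln (w i (\<mu> i)) + (\<Sum>j\<in>N - {i}. ln (w j (\<mu> j)))"
    using assms(1,6) by (simp add: sum.remove)
  also have "(\<Sum>j\<in>N - {i}. ln (w j (\<mu> j))) \<le> (\<Sum>j\<in>N - {i}. ln (U j))"
    using assms(5) \<mu>_room by (intro sum_mono ln_mono) auto
  also have "\<dots> \<le> (\<Sum>j\<in>N. ln (U j))"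
    using assms(1) U_ge_one by (intro sum_mono2) auto
  finally show ?thesis by linarith
qed

theorem lemma1:
  fixes Rhos :: "real set" and n :: nat and A :: "'a set"
    and v :: "nat \<Rightarrow> 'a \<Rightarrow> real" and b rho :: "nat \<Rightarrow> real"
    and m :: real and r :: "'a \<Rightarrow> real"
  assumes "finite Rhos" and "0 \<in> Rhos" and "\<forall>x\<in>Rhos. x \<ge> 0"
    and "finite A" and "card A = n"
    and "in_BN Rhos {1..n} b rho"
    and "\<exists>\<sigma>. envy_free_alloc {1..n} A v b rho m r \<sigma>"
  shows "\<exists>\<Lambda>>0. \<forall>\<Lambda>'. 0 < \<Lambda>' \<and> \<Lambda>' \<le> \<Lambda> \<longrightarrow>
           (\<forall>\<mu>. is_max_log_assignment {1..n} A (lamL {1..n} A v b rho m r \<Lambda>') \<mu> \<longrightarrow>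
              (\<forall>i\<in>{1..n}. \<forall>\<sigma>. envy_free_alloc {1..n} A v b rho m r \<sigma> \<longrightarrow>
                 util v b rho i (r (\<mu> i)) (\<mu> i) = util v b rho i (r (\<sigma> i)) (\<sigma> i)))"
proof -
  define N where "N = {1..n}"
  obtain \<sigma>0 where \<sigma>0: "envy_free_alloc N A v b rho m r \<sigma>0" using assms(7) N_def by blast
  \<comment> \<open>The only use of the hypotheses on Rhos.\<close>
  have rho_nonneg: "0 \<le> rho j" if "j \<in> N" for j
    using assms(3,6) that unfolding in_BN_def N_def by blast
  define C where "C = (\<Sum>j\<in>N. ln (1 + rho j))"
  have "0 \<le> C" unfolding C_def using rho_nonneg by (simp add: sum_nonneg)
  have "\<forall>\<Lambda>'. 0 < \<Lambda>' \<and> \<Lambda>' \<le> exp (- C - 1) \<longrightarrow>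
          (\<forall>\<mu>. is_max_log_assignment N A (lamL N A v b rho m r \<Lambda>') \<mu> \<longrightarrow>
             (\<forall>i\<in>N. \<forall>\<sigma>. envy_free_alloc N A v b rho m r \<sigma> \<longrightarrow>
                util v b rho i (r (\<mu> i)) (\<mu> i) = util v b rho i (r (\<sigma> i)) (\<sigma> i)))"
  proof (intro allI impI ballI)
    fix \<Lambda>' \<mu> i \<sigma>
    assume \<Lambda>': "0 < \<Lambda>' \<and> \<Lambda>' \<le> exp (- C - 1)"
      and \<mu>: "is_max_log_assignment N A (lamL N A v b rho m r \<Lambda>') \<mu>"
      and i: "i \<in> N" and \<sigma>: "envy_free_alloc N A v b rho m r \<sigma>"
    have "\<Lambda>' \<le> 1" using \<Lambda>' \<open>0 \<le> C\<close> order_trans by fastforce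
    have "- C \<le> ln (lamL N A v b rho m r \<Lambda>' i (\<mu> i))"
      unfolding C_def
      using \<sigma>0 \<Lambda>' \<open>\<Lambda>' \<le> 1\<close> rho_nonneg i
      by (intro max_log_assignment_weight_lower_bound[OF _ \<mu>])
         (auto simp: N_def envy_free_alloc_def lamL_at_envy_free_ge_one lamL_bounds)
    moreover have "ln \<Lambda>' \<le> - C - 1" using ln_mono[of \<Lambda>' "exp (- C - 1)"] \<Lambda>' by simp
    ultimately have "lamL N A v b rho m r \<Lambda>' i (\<mu> i) \<noteq> \<Lambda>'" by auto
    then have "util v b rho i (r (\<mu> i)) (\<mu> i) = util v b rho i (r (\<sigma>0 i)) (\<sigma>0 i)"
      using lamL_eq_if_envy_free[OF \<sigma>0 i] by metis
    then show "util v b rho i (r (\<mu> i)) (\<mu> i) = util v b rho i (r (\<sigma> i)) (\<sigma> i)"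
      using envy_free_alloc_util_eq[OF \<sigma>0 \<sigma> i] by simp
  qed
  then show ?thesis unfolding N_def by (intro exI[of _ "exp (- C - 1)"]) auto
qed

end
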